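(* Fix real $a$, $b>0$, $c>0$ and a prior $F$ with support $[\alpha,\beta]\subset(0,c)$ and mean $M_1$. Let $\mathcal S$ be the set of symmetric information structures in which each player privately observes a signal about his own type only, the same signal rule being applied to both players and signals being independent across players conditional on the type profile. For $\pi\in\mathcal S$, let $\hat\theta_\pi=E[\theta\mid s_\pi]$ be a player's posterior-mean cost; posterior means are i.i.d. across players. The affine benchmark induced by $\pi$ is the unique symmetric Bayesian Nash equilibrium of the affine relaxation of the contest in which each player's type is his posterior-mean cost (distributed as $\hat\theta_\pi$); when $\hat\theta_\pi$ is degenerate, its expected effort is defined by continuity as the limit of the expected effort as the variance of the posterior-mean distribution tends to $0$ with the mean fixed. Let $\mathcal E(\pi)$ denote the ex ante expected effort in the affine benchmark induced by $\pi$. Then $\mathcal E(\pi)$ depends on $\pi$ only through $\operatorname{Var}(\hat\theta_\pi)$. Consequently, a designer maximizing $\mathcal E$ over $\mathcal S$ chooses no disclosure (the uninformative signal) if $a>0$, full disclosure (signal revealing the type) if $a<0$, and is indifferent among all signals in $\mathcal S$ if $a=0$. Equivalently, if $\pi$ is more Blackwell-informative than $\pi'$, then $\mathcal E(\pi)\le\mathcal E(\pi')$ when $a>0$ and $\mathcal E(\pi)\ge\mathcal E(\pi')$ when $a<0$.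
   Context: The contest: two players with cost types; a type-$\theta$ player choosing effort $\tilde x$ against opponent strategy $x(\cdot)$ receives expected payoff $E[P(\tilde x,x(\text{opponent's type}))]-\theta\tilde x$, where $P(x,y)=\tfrac12+(x-y)\bigl(c-b(x+y)+axy\bigr)$. Because payoffs are linear in the cost, a player informed by a signal evaluates payoffs using his posterior-mean cost. The affine relaxation allows actions in $\mathbb R$ and uses the raw, untruncated $P$; for $a=0$ each type $\hat\theta$ plays the dominant strategy $(c-\hat\theta)/(2b)$. *)

theory Defs
  imports "HOL-Probability.Probability"
begin

(* Contest success function P(x,y) (raw, untruncated) *)
definition Pcs :: "real \<Rightarrow> real \<Rightarrow> real \<Rightarrow> real \<Rightarrow> real \<Rightarrow> real" where
  "Pcs a b c x y = 1/2 + (x - y) * (c - b * (x + y) + a * x * y)"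

definition relax_payoff ::
  "real \<Rightarrow> real \<Rightarrow> real \<Rightarrow> real measure \<Rightarrow> (real \<Rightarrow> real) \<Rightarrow> real \<Rightarrow> real \<Rightarrow> real" where
  "relax_payoff a b c G x t z = (\<integral>t'. Pcs a b c z (x t') \<partial>G) - t * z"

definition sym_BNE :: "real \<Rightarrow> real \<Rightarrow> real \<Rightarrow> real measure \<Rightarrow> (real \<Rightarrow> real) \<Rightarrow> bool" where
  "sym_BNE a b c G x \<longleftrightarrow> x \<in> borel_measurable G \<and> integrable G (\<lambda>t. (x t)^2) \<and>
     (AE t in G. \<forall>z. relax_payoff a b c G x t z \<le> relax_payoff a b c G x t (x t))"

definition eq_effort :: "real \<Rightarrow> real \<Rightarrow> real \<Rightarrow> real measure \<Rightarrow> real" where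
  "eq_effort a b c G = (THE e. \<exists>x. sym_BNE a b c G x \<and> e = (\<integral>t. x t \<partial>G))"

definition dist_mean :: "real measure \<Rightarrow> real" where
  "dist_mean G = (\<integral>t. t \<partial>G)"

definition dist_var :: "real measure \<Rightarrow> real" where
  "dist_var G = (\<integral>t. (t - dist_mean G)^2 \<partial>G)"

definition limit_effort :: "real \<Rightarrow> real \<Rightarrow> real \<Rightarrow> real \<Rightarrow> real" where
  "limit_effort a b c \<mu> = (THE L. \<forall>Gs :: nat \<Rightarrow> real measure.
     ((\<forall>n. prob_space (Gs n) \<and> sets (Gs n) = sets borel \<and> integrable (Gs n) (\<lambda>t. t^2) \<and>
           dist_mean (Gs n) = \<mu> \<and> dist_var (Gs n) > 0) \<and>
      (\<lambda>n. dist_var (Gs n)) \<longlonglongrightarrow> 0)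
     \<longrightarrow> (\<lambda>n. eq_effort a b c (Gs n)) \<longlonglongrightarrow> L)"

definition benchmark_effort :: "real \<Rightarrow> real \<Rightarrow> real \<Rightarrow> real measure \<Rightarrow> real" where
  "benchmark_effort a b c G =
     (if dist_var G > 0 then eq_effort a b c G else limit_effort a b c (dist_mean G))"

definition prior_support :: "real measure \<Rightarrow> real \<Rightarrow> real \<Rightarrow> bool" where
  "prior_support F \<alpha> \<beta> \<longleftrightarrow> \<alpha> \<le> \<beta> \<and> emeasure F {\<alpha>..\<beta>} = 1 \<and>
     (\<forall>x\<in>{\<alpha>..\<beta>}. \<forall>e>0. 0 < emeasure F {x - e<..<x + e})"

(* A (symmetric, private, conditionally independent) information structure is given by the
   common signal rule: a Markov kernel from a player's own type to the signal space \<Sigma>. *)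
definition info_structs :: "'b measure \<Rightarrow> (real \<Rightarrow> 'b measure) set" where
  "info_structs \<Sigma> = {K. K \<in> borel \<rightarrow>\<^sub>M prob_algebra \<Sigma>}"

definition joint :: "real measure \<Rightarrow> 'b measure \<Rightarrow> (real \<Rightarrow> 'b measure) \<Rightarrow> (real \<times> 'b) measure" where
  "joint F \<Sigma> K = F \<bind> (\<lambda>\<theta>. distr (K \<theta>) (borel \<Otimes>\<^sub>M \<Sigma>) (\<lambda>s. (\<theta>, s)))"

definition post_mean :: "real measure \<Rightarrow> 'b measure \<Rightarrow> (real \<Rightarrow> 'b measure) \<Rightarrow> real \<times> 'b \<Rightarrow> real" where
  "post_mean F \<Sigma> K = real_cond_exp (joint F \<Sigma> K) (vimage_algebra (space (joint F \<Sigma> K)) snd \<Sigma>) fst"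

definition post_dist :: "real measure \<Rightarrow> 'b measure \<Rightarrow> (real \<Rightarrow> 'b measure) \<Rightarrow> real measure" where
  "post_dist F \<Sigma> K = distr (joint F \<Sigma> K) borel (post_mean F \<Sigma> K)"

definition post_var :: "real measure \<Rightarrow> 'b measure \<Rightarrow> (real \<Rightarrow> 'b measure) \<Rightarrow> real" where
  "post_var F \<Sigma> K = dist_var (post_dist F \<Sigma> K)"

definition exp_effort ::
  "real \<Rightarrow> real \<Rightarrow> real \<Rightarrow> real measure \<Rightarrow> 'b measure \<Rightarrow> (real \<Rightarrow> 'b measure) \<Rightarrow> real" where
  "exp_effort a b c F \<Sigma> K = benchmark_effort a b c (post_dist F \<Sigma> K)"

definition no_disclosure :: "real \<Rightarrow> unit measure" where
  "no_disclosure = (\<lambda>\<theta>. return (count_space UNIV) ())"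

definition full_disclosure :: "real \<Rightarrow> real measure" where
  "full_disclosure = (\<lambda>\<theta>. return borel \<theta>)"

definition more_informative ::
  "'b measure \<Rightarrow> (real \<Rightarrow> 'b measure) \<Rightarrow> 'c measure \<Rightarrow> (real \<Rightarrow> 'c measure) \<Rightarrow> bool" where
  "more_informative \<Sigma> K \<Sigma>' K' \<longleftrightarrow>
     (\<exists>g \<in> \<Sigma> \<rightarrow>\<^sub>M prob_algebra \<Sigma>'. \<forall>\<theta>. K' \<theta> = K \<theta> \<bind> g)"

end

theory Submission
  imports Defs
begin

(* In the affine relaxation each type faces a payoff that is a concave quadratic in his own effort, so
   a symmetric equilibrium is affine in the type, x(t) = (c - a m2 - t) / (2 (b - a m1)), where m1 and
   m2 are the first two moments of equilibrium effort.  Integrating this identity and its square gives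
   two equations for m1 and m2 that see the type distribution only through its mean and variance, and
   they have exactly one admissible solution, affine_effort.  For posterior-mean types the mean is the
   prior mean, so the expected effort depends on the signal only through
   Var(E[\<theta>|s]) = Var(\<theta>) - E[(\<theta> - E[\<theta>|s])^2].  Garbling a signal can only increase the
   residual E[(\<theta> - E[\<theta>|s])^2]: if h(s') is the best predictor from the garbled signal s', then
   by Jensen the predictor E[h(s') | s] does at least as well, and E[\<theta>|s] does better still.  Finally
   affine_effort decreases in the variance if a > 0, increases if a < 0, and does not depend on it
   if a = 0. *)

section \<open>Closed-form effort\<close>

(* With u = b - a e and k = b^2 - a (c - \<mu>) the moment equations become 4 u^2 (u^2 - k) = a^2 s
   (effort_equation_iff_biquadratic); the formula picks its positive root. *)
definition affine_effort :: "real \<Rightarrow> real \<Rightarrow> real \<Rightarrow> real \<Rightarrow> real \<Rightarrow> real" where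
  "affine_effort a b c \<mu> s =
     (if a = 0 then (c - \<mu>) / (2 * b)
      else (b - sqrt ((b^2 - a * (c - \<mu>) + sqrt ((b^2 - a * (c - \<mu>))^2 + a^2 * s)) / 2)) / a)"

lemma biquadratic_positive_root:
  fixes k w u :: real
  assumes "w > 0"
  shows "u > 0 \<and> 4 * u^2 * (u^2 - k) = w \<longleftrightarrow> u = sqrt ((k + sqrt (k^2 + w)) / 2)"
proof
  assume u: "u > 0 \<and> 4 * u^2 * (u^2 - k) = w"
  then have "u^2 - k > 0"
    using assms by (metis mult_pos_pos zero_less_mult_pos zero_less_numeral zero_less_power)
  then have "2 * u^2 - k \<ge> 0" using u by (smt (verit) zero_less_power)
  moreover have "(2 * u^2 - k)^2 = k^2 + w" using u by (simp add: power2_eq_square algebra_simps)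
  ultimately have "sqrt (k^2 + w) = 2 * u^2 - k" by (metis real_sqrt_abs abs_of_nonneg)
  then show "u = sqrt ((k + sqrt (k^2 + w)) / 2)" using u by simp
next
  define r where "r = sqrt (k^2 + w)"
  have "r > sqrt (k^2)" unfolding r_def using assms by (simp del: real_sqrt_abs)
  then have r: "r > \<bar>k\<bar>" by simp
  have r2: "r^2 = k^2 + w" unfolding r_def using assms by simp
  assume "u = sqrt ((k + sqrt (k^2 + w)) / 2)"
  then have u: "u = sqrt ((k + r) / 2)" unfolding r_def .
  have "u^2 = (k + r) / 2" using u r by simp
  then have "4 * u^2 * (u^2 - k) = 4 * ((k + r) / 2) * ((k + r) / 2 - k)" by (simp only:)
  also have "\<dots> = w" using r2 by (simp add: power2_eq_square field_simps)
  finally show "u > 0 \<and> 4 * u^2 * (u^2 - k) = w" using u r by simp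
qed

lemma effort_equation_iff_biquadratic:
  fixes a b c \<mu> s e u :: real
  assumes a: "a \<noteq> 0" and u: "u > 0" "u = b - a * e"
  shows "2 * u * e = c - \<mu> - a * (e^2 + s / (4 * u^2))
    \<longleftrightarrow> 4 * u^2 * (u^2 - (b^2 - a * (c - \<mu>))) = a^2 * s"
proof -
  have nz: "4 * u^2 * a \<noteq> 0" using u a by simp
  have "2 * u * e = c - \<mu> - a * (e^2 + s / (4 * u^2)) \<longleftrightarrow>
        4 * u^2 * a * (2 * u * e) = 4 * u^2 * a * (c - \<mu> - a * (e^2 + s / (4 * u^2)))"
    by (simp only: mult_cancel_left) (use nz in simp)
  also have "\<dots> \<longleftrightarrow>
        4 * u^2 * (2 * u * (b - u)) = 4 * u^2 * (a * (c - \<mu>)) - 4 * u^2 * (b - u)^2 - a^2 * s"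
  proof -
    have "a * e = b - u" using u by simp
    moreover have "4 * u^2 * a * (c - \<mu> - a * (e^2 + s / (4 * u^2)))
        = 4 * u^2 * (a * (c - \<mu>)) - 4 * u^2 * (a * e)^2 - a^2 * s"
      using u by (simp add: field_simps power2_eq_square)
    moreover have "4 * u^2 * a * (2 * u * e) = 4 * u^2 * (2 * u * (a * e))" by simp
    ultimately show ?thesis by (simp only:)
  qed
  also have "\<dots> \<longleftrightarrow> 4 * u^2 * (u^2 - (b^2 - a * (c - \<mu>))) = a^2 * s"
  proof -
    have "4 * u^2 * (2 * u * (b - u)) - (4 * u^2 * (a * (c - \<mu>)) - 4 * u^2 * (b - u)^2 - a^2 * s)
        = a^2 * s - 4 * u^2 * (u^2 - (b^2 - a * (c - \<mu>)))"
      by (simp add: power2_eq_square algebra_simps)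
    then show ?thesis by arith
  qed
  finally show ?thesis .
qed

lemma affine_effort_iff:
  assumes b: "b > 0" and s: "s > 0"
  shows "b - a * e > 0 \<and> 2 * (b - a * e) * e = c - \<mu> - a * (e^2 + s / (4 * (b - a * e)^2))
    \<longleftrightarrow> e = affine_effort a b c \<mu> s"
proof (cases "a = 0")
  case True
  then show ?thesis using b by (auto simp: affine_effort_def field_simps)
next
  case a: False
  define u where "u = b - a * e"
  define k where "k = b^2 - a * (c - \<mu>)"
  have "u > 0 \<and> 2 * u * e = c - \<mu> - a * (e^2 + s / (4 * u^2))
      \<longleftrightarrow> u > 0 \<and> 4 * u^2 * (u^2 - k) = a^2 * s"
    using effort_equation_iff_biquadratic[OF a _ u_def] unfolding k_def by blast
  also have "\<dots> \<longleftrightarrow> u = sqrt ((k + sqrt (k^2 + a^2 * s)) / 2)"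
    by (rule biquadratic_positive_root) (use a s in simp)
  also have "\<dots> \<longleftrightarrow> e = affine_effort a b c \<mu> s"
    unfolding affine_effort_def k_def u_def using a by (auto simp: field_simps)
  finally show ?thesis unfolding u_def .
qed

lemma isCont_affine_effort: "isCont (affine_effort a b c \<mu>) s"
  unfolding affine_effort_def by (cases "a = 0") (auto intro!: continuous_intros)

lemma affine_effort_slope_mono:
  assumes "s \<le> s'"
  shows "sqrt ((b^2 - a * (c - \<mu>) + sqrt ((b^2 - a * (c - \<mu>))^2 + a^2 * s)) / 2)
    \<le> sqrt ((b^2 - a * (c - \<mu>) + sqrt ((b^2 - a * (c - \<mu>))^2 + a^2 * s')) / 2)"
  using assms by (simp add: mult_left_mono)

lemma affine_effort_antimono:
  assumes "a > 0" "s \<le> s'"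
  shows "affine_effort a b c \<mu> s' \<le> affine_effort a b c \<mu> s"
  using affine_effort_slope_mono[OF assms(2)] assms(1)
  by (simp add: affine_effort_def divide_right_mono)

lemma affine_effort_mono:
  assumes "a < 0" "s \<le> s'"
  shows "affine_effort a b c \<mu> s \<le> affine_effort a b c \<mu> s'"
  using affine_effort_slope_mono[OF assms(2)] assms(1)
  by (simp add: affine_effort_def divide_right_mono_neg)

section \<open>Symmetric equilibria of the affine relaxation\<close>

lemma concave_quadratic_argmax:
  fixes A B X :: real
  assumes "A > 0"
  shows "(\<forall>z. z * B - z^2 * A \<le> X * B - X^2 * A) \<longleftrightarrow> X = B / (2 * A)"
proof -
  have square: "z * B - z^2 * A = B^2 / (4 * A) - A * (z - B / (2 * A))^2" for z
    using assms by (simp add: field_simps power2_eq_square)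
  let ?m = "B / (2 * A)"
  show ?thesis
  proof
    assume "\<forall>z. z * B - z^2 * A \<le> X * B - X^2 * A"
    then have "A * (X - ?m)^2 \<le> 0" unfolding square by (auto dest: spec[of _ ?m])
    then show "X = ?m" using assms by (simp add: mult_le_0_iff)
  next
    assume "X = ?m"
    then show "\<forall>z. z * B - z^2 * A \<le> X * B - X^2 * A" unfolding square using assms by simp
  qed
qed

lemma quadratic_argmax_cases:
  fixes A B X :: real
  assumes "\<forall>z. z * B - z^2 * A \<le> X * B - X^2 * A"
  shows "A > 0 \<or> A = 0 \<and> B = 0"
proof -
  have "(X + 1) * B - (X + 1)^2 * A \<le> X * B - X^2 * A"
    and "(X - 1) * B - (X - 1)^2 * A \<le> X * B - X^2 * A"
    using assms by blast+
  then have "B \<le> (2 * X + 1) * A" and "(2 * X - 1) * A \<le> B"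
    by (simp_all add: power2_eq_square algebra_simps)
  moreover have "(2 * X + 1) * A - (2 * X - 1) * A = 2 * A" by algebra
  ultimately have "A \<ge> 0" by linarith
  then show ?thesis using \<open>B \<le> _\<close> \<open>_ \<le> B\<close> by (cases "A = 0") auto
qed

lemma (in prob_space) integral_square_deviation:
  fixes X :: "'a \<Rightarrow> real"
  assumes "integrable M X" "integrable M (\<lambda>x. (X x)^2)"
  shows "(\<integral>x. (p - X x)^2 \<partial>M) = (p - expectation X)^2 + variance X"
  using assms by (simp add: power2_diff prob_space algebra_simps power2_eq_square)

lemma Pcs_expand: "Pcs a b c z y = (1/2 + c * z - b * z^2) + (a * z^2 - c) * y + (b - a * z) * y^2"
  by (simp add: Pcs_def algebra_simps power2_eq_square)

locale type_distribution = prob_space G for G :: "real measure" +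
  assumes sets_eq_borel [measurable_cong]: "sets G = sets borel"
    and integrable_square: "integrable G (\<lambda>t. t^2)"
begin

lemma integrable_ident: "integrable G (\<lambda>t. t)"
  by (rule square_integrable_imp_integrable) (auto intro: integrable_square)

lemma integral_square_deviation_dist:
  "(\<integral>t. (p - t)^2 \<partial>G) = (p - dist_mean G)^2 + dist_var G"
  using integral_square_deviation[OF integrable_ident integrable_square]
  by (simp add: dist_mean_def dist_var_def)

lemma not_AE_eq_const:
  assumes "dist_var G > 0"
  shows "\<not> (AE t in G. t = p)"
proof
  assume ae: "AE t in G. t = p"
  then have "dist_mean G = p"
    unfolding dist_mean_def by (subst integral_cong_AE[where g = "\<lambda>_. p"]) (auto simp: prob_space)
  then have "dist_var G = 0"
    using ae unfolding dist_var_def by (subst integral_cong_AE[where g = "\<lambda>_. 0"]) auto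
  then show False using assms by simp
qed

lemma integral_linear_strategy:
  shows "(\<integral>t. (p - t) / (2 * u) \<partial>G) = (p - dist_mean G) / (2 * u)"
    and "(\<integral>t. ((p - t) / (2 * u))^2 \<partial>G) = ((p - dist_mean G)^2 + dist_var G) / (4 * u^2)"
proof -
  show "(\<integral>t. (p - t) / (2 * u) \<partial>G) = (p - dist_mean G) / (2 * u)"
    using integrable_ident by (simp add: dist_mean_def prob_space)
  have "(\<integral>t. ((p - t) / (2 * u))^2 \<partial>G) = (\<integral>t. (p - t)^2 \<partial>G) / (4 * u^2)"
    by (simp add: power_divide power_mult_distrib)
  then show "(\<integral>t. ((p - t) / (2 * u))^2 \<partial>G) = ((p - dist_mean G)^2 + dist_var G) / (4 * u^2)"
    by (simp add: integral_square_deviation_dist)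
qed

lemma relax_payoff_eq:
  assumes "integrable G x" "integrable G (\<lambda>t. (x t)^2)"
  shows "relax_payoff a b c G x t z = 1/2 - c * expectation x + b * expectation (\<lambda>t. (x t)^2)
     + z * (c - a * expectation (\<lambda>t. (x t)^2) - t) - z^2 * (b - a * expectation x)"
  using assms by (simp add: relax_payoff_def Pcs_expand prob_space algebra_simps)

lemma sym_BNE_iff_AE_argmax:
  assumes x: "x \<in> borel_measurable G" "integrable G (\<lambda>t. (x t)^2)"
  defines "m1 \<equiv> expectation x" and "m2 \<equiv> expectation (\<lambda>t. (x t)^2)"
  shows "sym_BNE a b c G x \<longleftrightarrow> (AE t in G. \<forall>z.
     z * (c - a * m2 - t) - z^2 * (b - a * m1) \<le> x t * (c - a * m2 - t) - (x t)^2 * (b - a * m1))"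
proof -
  have "integrable G x" using x by (rule square_integrable_imp_integrable)
  then show ?thesis
    using x by (simp add: sym_BNE_def relax_payoff_eq m1_def m2_def)
qed

lemma sym_BNE_affine:
  assumes v: "dist_var G > 0" and bne: "sym_BNE a b c G x"
  defines "m1 \<equiv> expectation x" and "m2 \<equiv> expectation (\<lambda>t. (x t)^2)"
  shows "b - a * m1 > 0" and "AE t in G. x t = (c - a * m2 - t) / (2 * (b - a * m1))"
proof -
  have x: "x \<in> borel_measurable G" "integrable G (\<lambda>t. (x t)^2)"
    using bne by (auto simp: sym_BNE_def)
  note argmax = bne[unfolded sym_BNE_iff_AE_argmax[OF x], folded m1_def m2_def]
  have "AE t in G. b - a * m1 > 0 \<or> t = c - a * m2"
    using argmax by eventually_elim (use quadratic_argmax_cases in fastforce)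
  then show pos: "b - a * m1 > 0"
    using not_AE_eq_const[OF v, of "c - a * m2"] by (cases "b - a * m1 > 0") auto
  show "AE t in G. x t = (c - a * m2 - t) / (2 * (b - a * m1))"
    using argmax by eventually_elim (simp add: concave_quadratic_argmax[OF pos])
qed

lemma sym_BNE_mean:
  assumes b: "b > 0" and v: "dist_var G > 0" and bne: "sym_BNE a b c G x"
  shows "expectation x = affine_effort a b c (dist_mean G) (dist_var G)"
proof -
  define m1 where "m1 = expectation x"
  define m2 where "m2 = expectation (\<lambda>t. (x t)^2)"
  define u where "u = b - a * m1"
  have u: "u > 0" using sym_BNE_affine(1)[OF v bne] unfolding u_def m1_def .
  have ae: "AE t in G. x t = (c - a * m2 - t) / (2 * u)"
    using sym_BNE_affine(2)[OF v bne] unfolding u_def m1_def m2_def .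
  have x: "x \<in> borel_measurable G" using bne by (simp add: sym_BNE_def)
  have "m1 = (c - a * m2 - dist_mean G) / (2 * u)"
    using integral_cong_AE[OF x _ ae] integral_linear_strategy(1)[where p = "c - a * m2" and u = u]
    by (simp add: m1_def)
  then have p: "c - a * m2 - dist_mean G = 2 * u * m1" using u by (simp add: field_simps)
  have "m2 = ((c - a * m2 - dist_mean G)^2 + dist_var G) / (4 * u^2)"
    using integral_cong_AE[OF _ _ AE_mp[OF ae], of "\<lambda>t. (x t)^2" "\<lambda>t. ((c - a * m2 - t) / (2 * u))^2"]
      integral_linear_strategy(2)[where p = "c - a * m2" and u = u] x by (simp add: m2_def)
  also have "\<dots> = m1^2 + dist_var G / (4 * u^2)"
    unfolding p using u by (simp add: field_simps power2_eq_square)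
  finally have "u > 0 \<and> 2 * u * m1 = c - dist_mean G - a * (m1^2 + dist_var G / (4 * u^2))"
    using u p by simp
  then show ?thesis
    unfolding m1_def[symmetric] using affine_effort_iff[OF b v] by (simp add: u_def)
qed

lemma sym_BNE_exists:
  assumes b: "b > 0" and v: "dist_var G > 0"
  shows "\<exists>x. sym_BNE a b c G x \<and> expectation x = affine_effort a b c (dist_mean G) (dist_var G)"
proof -
  define e where "e = affine_effort a b c (dist_mean G) (dist_var G)"
  define u where "u = b - a * e"
  define m2 where "m2 = e^2 + dist_var G / (4 * u^2)"
  have "u > 0 \<and> 2 * u * e = c - dist_mean G - a * m2"
    using affine_effort_iff[OF b v] unfolding e_def u_def m2_def by blast
  then have u: "u > 0" and p: "c - a * m2 - dist_mean G = 2 * u * e" by auto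
  define x where "x t = (c - a * m2 - t) / (2 * u)" for t
  have "integrable G (\<lambda>t. (c - a * m2 - t)^2)"
    using integrable_square integrable_ident by (simp add: power2_diff)
  then have x: "x \<in> borel_measurable G" "integrable G (\<lambda>t. (x t)^2)"
    unfolding x_def power_divide by simp_all
  have m1: "expectation x = e"
    unfolding x_def integral_linear_strategy(1) p using u by simp
  have m2: "expectation (\<lambda>t. (x t)^2) = m2"
    unfolding x_def integral_linear_strategy(2) p
    using u by (simp add: m2_def field_simps power2_eq_square)
  have "\<forall>z. z * (c - a * m2 - t) - z^2 * u \<le> x t * (c - a * m2 - t) - (x t)^2 * u" for t
    unfolding concave_quadratic_argmax[OF u] x_def ..
  then have "sym_BNE a b c G x"
    unfolding sym_BNE_iff_AE_argmax[OF x] m1 m2 u_def[symmetric] by simp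
  with m1 show ?thesis unfolding e_def by blast
qed

lemma eq_effort_eq:
  assumes "b > 0" "dist_var G > 0"
  shows "eq_effort a b c G = affine_effort a b c (dist_mean G) (dist_var G)"
  unfolding eq_effort_def
proof (rule the_equality)
  show "\<exists>x. sym_BNE a b c G x \<and> affine_effort a b c (dist_mean G) (dist_var G) = expectation x"
    using sym_BNE_exists[OF assms] by (metis)
qed (use sym_BNE_mean[OF assms] in auto)

end

definition two_point_dist :: "real \<Rightarrow> real \<Rightarrow> real measure" where
  "two_point_dist \<mu> d = distr (measure_pmf (pmf_of_set {\<mu> - d, \<mu> + d})) borel (\<lambda>t. t)"

lemma
  assumes "d > 0"
  shows type_distribution_two_point_dist: "type_distribution (two_point_dist \<mu> d)"
    and dist_mean_two_point_dist: "dist_mean (two_point_dist \<mu> d) = \<mu>"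
    and dist_var_two_point_dist: "dist_var (two_point_dist \<mu> d) = d^2"
proof -
  have card: "card {\<mu> - d, \<mu> + d} = 2" using assms by simp
  show "type_distribution (two_point_dist \<mu> d)"
    unfolding type_distribution_def type_distribution_axioms_def two_point_dist_def
    by (simp add: measure_pmf.prob_space_distr integrable_distr_eq integrable_measure_pmf_finite)
  show mean: "dist_mean (two_point_dist \<mu> d) = \<mu>"
    unfolding dist_mean_def two_point_dist_def using assms
    by (simp add: integral_distr integral_pmf_of_set card)
  show "dist_var (two_point_dist \<mu> d) = d^2"
    unfolding dist_var_def mean unfolding two_point_dist_def using assms
    by (simp add: integral_distr integral_pmf_of_set card power2_eq_square)
qed

lemma limit_effort_eq:
  assumes b: "b > 0"
  shows "limit_effort a b c \<mu> = affine_effort a b c \<mu> 0"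
proof -
  have effort_limit: "(\<lambda>n. eq_effort a b c (Gs n)) \<longlonglongrightarrow> affine_effort a b c \<mu> 0"
    if Gs: "\<forall>n. type_distribution (Gs n) \<and> dist_mean (Gs n) = \<mu> \<and> dist_var (Gs n) > 0"
      and lim: "(\<lambda>n. dist_var (Gs n)) \<longlonglongrightarrow> 0" for Gs
  proof -
    have "eq_effort a b c (Gs n) = affine_effort a b c \<mu> (dist_var (Gs n))" for n
      using Gs type_distribution.eq_effort_eq[OF _ b] by metis
    then show ?thesis
      using isCont_tendsto_compose[OF isCont_affine_effort lim] by simp
  qed
  \<comment> \<open>limit_effort is a THE over all admissible sequences; exhibiting one makes it determined.\<close>
  define Gs where "Gs n = two_point_dist \<mu> (1 / Suc n)" for n
  have Gs: "\<forall>n. type_distribution (Gs n) \<and> dist_mean (Gs n) = \<mu> \<and> dist_var (Gs n) > 0"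
    unfolding Gs_def
    by (simp add: type_distribution_two_point_dist dist_mean_two_point_dist dist_var_two_point_dist)
  have "(\<lambda>n. (1 / real (Suc n))^2) \<longlonglongrightarrow> 0"
    using tendsto_power[OF LIMSEQ_inverse_real_of_nat, of 2] by (simp add: inverse_eq_divide)
  then have lim: "(\<lambda>n. dist_var (Gs n)) \<longlonglongrightarrow> 0"
    unfolding Gs_def by (simp add: dist_var_two_point_dist)
  show ?thesis
    unfolding limit_effort_def
  proof (rule the_equality)
    show "\<forall>Gs. (\<forall>n. prob_space (Gs n) \<and> sets (Gs n) = sets borel \<and> integrable (Gs n) (\<lambda>t. t^2) \<and>
        dist_mean (Gs n) = \<mu> \<and> 0 < dist_var (Gs n)) \<and> (\<lambda>n. dist_var (Gs n)) \<longlonglongrightarrow> 0 \<longrightarrow>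
        (\<lambda>n. eq_effort a b c (Gs n)) \<longlonglongrightarrow> affine_effort a b c \<mu> 0"
      (is "\<forall>Gs. ?admissible Gs \<longrightarrow> _")
      using effort_limit by (auto simp: type_distribution_def type_distribution_axioms_def)
    fix L assume "\<forall>Gs. ?admissible Gs \<longrightarrow> (\<lambda>n. eq_effort a b c (Gs n)) \<longlonglongrightarrow> L"
    moreover have "?admissible Gs"
      using Gs lim by (simp add: type_distribution_def type_distribution_axioms_def)
    ultimately show "L = affine_effort a b c \<mu> 0"
      using effort_limit[OF Gs lim] LIMSEQ_unique by blast
  qed
qed

lemma (in type_distribution) benchmark_effort_eq:
  assumes "b > 0"
  shows "benchmark_effort a b c G = affine_effort a b c (dist_mean G) (dist_var G)"
proof (cases "dist_var G > 0")
  case True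
  then show ?thesis using eq_effort_eq[OF assms] by (simp add: benchmark_effort_def)
next
  case False
  then have "dist_var G = 0" using dist_var_def by (simp add: antisym_conv2)
  then show ?thesis using limit_effort_eq[OF assms] by (simp add: benchmark_effort_def)
qed

section \<open>Interval-valued random variables\<close>

lemma borel_measurable_clamp [measurable]: "clamp \<alpha> \<beta> \<in> (borel_measurable borel :: (real \<Rightarrow> real) set)"
  by (intro borel_measurable_continuous_onI clamp_continuous_on[of _ _ "\<lambda>x. x", simplified])

lemma clamp_real_in: "\<alpha> \<le> \<beta> \<Longrightarrow> clamp \<alpha> \<beta> (t::real) \<in> {\<alpha>..\<beta>}"
  using clamp_in_interval[of \<alpha> \<beta> t] by simp

lemma square_diff_le_interval:
  fixes x y :: real
  assumes "x \<in> {\<alpha>..\<beta>}" "y \<in> {\<alpha>..\<beta>}"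
  shows "(x - y)^2 \<le> (\<beta> - \<alpha>)^2"
  using assms by (auto simp: abs_le_square_iff[symmetric])

lemma (in finite_measure) integrable_interval_valued:
  fixes u :: "'a \<Rightarrow> real"
  assumes "u \<in> borel_measurable M" "AE x in M. u x \<in> {\<alpha>..\<beta>}"
  shows "integrable M u"
proof (rule integrable_const_bound[OF _ assms(1)])
  show "AE x in M. norm (u x) \<le> \<bar>\<alpha>\<bar> + \<bar>\<beta>\<bar>"
    using assms(2) by eventually_elim auto
qed

lemma (in finite_measure) integrable_interval_valued_products:
  fixes u v w :: "'a \<Rightarrow> real"
  assumes [measurable]: "u \<in> borel_measurable M" "v \<in> borel_measurable M" "w \<in> borel_measurable M"
    and "AE x in M. u x \<in> {\<alpha>..\<beta>}" "AE x in M. v x \<in> {\<alpha>..\<beta>}" "AE x in M. w x \<in> {\<alpha>..\<beta>}"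
  shows "integrable M (\<lambda>x. u x * w x)"
    "integrable M (\<lambda>x. (u x - v x) * w x)" "integrable M (\<lambda>x. (u x - v x)^2)"
proof -
  define R where "R = \<bar>\<alpha>\<bar> + \<bar>\<beta>\<bar>"
  have product_le: "\<bar>a * b\<bar> \<le> R * R" if "\<bar>a\<bar> \<le> R" "\<bar>b\<bar> \<le> R" for a b :: real
    unfolding abs_mult using mult_mono'[OF that] by simp
  have "AE x in M. \<bar>u x\<bar> \<le> R \<and> \<bar>u x - v x\<bar> \<le> R \<and> \<bar>w x\<bar> \<le> R"
    using assms(4-6) by eventually_elim (simp add: R_def abs_le_iff; linarith)
  then have bounds: "AE x in M. \<bar>u x * w x\<bar> \<le> R * R
      \<and> \<bar>(u x - v x) * w x\<bar> \<le> R * R \<and> \<bar>(u x - v x)^2\<bar> \<le> R * R"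
    by eventually_elim (simp only: power2_eq_square product_le)
  have bounded_integrable: "integrable M f" if "f \<in> borel_measurable M" "AE x in M. \<bar>f x\<bar> \<le> B"
    for f :: "'a \<Rightarrow> real" and B
    using integrable_const_bound[of f B] that by simp
  show "integrable M (\<lambda>x. u x * w x)" using bounds
    by (intro bounded_integrable) (auto elim: eventually_mono)
  show "integrable M (\<lambda>x. (u x - v x) * w x)" using bounds
    by (intro bounded_integrable) (auto elim: eventually_mono)
  show "integrable M (\<lambda>x. (u x - v x)^2)" using bounds
    by (intro bounded_integrable) (auto elim: eventually_mono)
qed

lemma (in prob_space) interval_valued_moments:
  fixes h :: "'a \<Rightarrow> real"
  assumes [measurable]: "h \<in> borel_measurable M" and in_interval: "AE x in M. h x \<in> {\<alpha>..\<beta>}"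
  shows "expectation h \<in> {\<alpha>..\<beta>}"
    and "(\<integral>x. (p - h x)^2 \<partial>M) = (p - expectation h)^2 + variance h"
    and "0 \<le> variance h"
    and "variance h = expectation (\<lambda>x. (h x)^2) - (expectation h)^2"
    and "p \<in> {\<alpha>..\<beta>} \<Longrightarrow> (\<integral>x. (p - h x)^2 \<partial>M) \<le> (\<beta> - \<alpha>)^2"
proof -
  have h: "integrable M h" "integrable M (\<lambda>x. (h x)^2)"
    using integrable_interval_valued[OF assms]
      integrable_interval_valued_products(1)[OF assms(1,1,1) in_interval in_interval in_interval]
    by (simp_all add: power2_eq_square)
  show "expectation h \<in> {\<alpha>..\<beta>}"
    using in_interval h by (auto intro: integral_ge_const integral_le_const)
  show "(\<integral>x. (p - h x)^2 \<partial>M) = (p - expectation h)^2 + variance h"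
    by (rule integral_square_deviation[OF h])
  show "0 \<le> variance h" by (rule variance_positive)
  show "variance h = expectation (\<lambda>x. (h x)^2) - (expectation h)^2"
    by (rule variance_eq[OF h])
  assume p: "p \<in> {\<alpha>..\<beta>}"
  have "AE x in M. (p - h x)^2 \<le> (\<beta> - \<alpha>)^2"
    using in_interval by eventually_elim (rule square_diff_le_interval[OF p])
  moreover have "integrable M (\<lambda>x. (p - h x)^2)"
    using h by (simp add: power2_diff)
  ultimately show "(\<integral>x. (p - h x)^2 \<partial>M) \<le> (\<beta> - \<alpha>)^2"
    by (intro integral_le_const) auto
qed

lemma kernel_interval_valued_moments:
  fixes h :: "'t \<Rightarrow> real"
  assumes g: "g \<in> S \<rightarrow>\<^sub>M prob_algebra T"
    and [measurable]: "h \<in> borel_measurable T" and h_in: "\<forall>s\<in>space T. h s \<in> {\<alpha>..\<beta>}"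
  shows "(\<lambda>x. \<integral>s. h s \<partial>g x) \<in> borel_measurable S"
    and "x \<in> space S \<Longrightarrow> (\<integral>s. h s \<partial>g x) \<in> {\<alpha>..\<beta>}"
    and "x \<in> space S \<Longrightarrow> (\<integral>s. (p - h s)^2 \<partial>g x)
      = (p - (\<integral>s. h s \<partial>g x))^2 + ((\<integral>s. (h s)^2 \<partial>g x) - (\<integral>s. h s \<partial>g x)^2)"
    and "x \<in> space S \<Longrightarrow> (\<integral>s. h s \<partial>g x)^2 \<le> (\<integral>s. (h s)^2 \<partial>g x)"
    and "x \<in> space S \<Longrightarrow> p \<in> {\<alpha>..\<beta>} \<Longrightarrow> (\<integral>s. (p - h s)^2 \<partial>g x) \<le> (\<beta> - \<alpha>)^2"
proof -
  show "(\<lambda>x. \<integral>s. h s \<partial>g x) \<in> borel_measurable S"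
    using measurable_prob_algebraD[OF g] by measurable
  assume x: "x \<in> space S"
  have gx: "prob_space (g x)" "sets (g x) = sets T"
    using measurable_space[OF g x] by (auto simp: space_prob_algebra)
  interpret gx: prob_space "g x" by (rule gx(1))
  have "AE s in g x. h s \<in> {\<alpha>..\<beta>}"
    using h_in sets_eq_imp_space_eq[OF gx(2)] by (intro AE_I2) auto
  note moments = gx.interval_valued_moments[where h = h, OF _ this]
  show "(\<integral>s. h s \<partial>g x) \<in> {\<alpha>..\<beta>}"
    "(\<integral>s. (p - h s)^2 \<partial>g x)
      = (p - (\<integral>s. h s \<partial>g x))^2 + ((\<integral>s. (h s)^2 \<partial>g x) - (\<integral>s. h s \<partial>g x)^2)"
    "(\<integral>s. h s \<partial>g x)^2 \<le> (\<integral>s. (h s)^2 \<partial>g x)"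
    "p \<in> {\<alpha>..\<beta>} \<Longrightarrow> (\<integral>s. (p - h s)^2 \<partial>g x) \<le> (\<beta> - \<alpha>)^2"
    using moments(1,3,4) moments(2,5)[of p] gx(2) by (simp_all cong: measurable_cong_sets)
qed

lemma integral_bind_prob_kernel:
  fixes \<phi> :: "'b \<Rightarrow> real"
  assumes "prob_space M" "g \<in> M \<rightarrow>\<^sub>M prob_algebra N"
    and "\<phi> \<in> borel_measurable N" "\<And>y. y \<in> space N \<Longrightarrow> \<bar>\<phi> y\<bar> \<le> B"
  shows "(\<integral>y. \<phi> y \<partial>(M \<bind> g)) = (\<integral>x. (\<integral>y. \<phi> y \<partial>g x) \<partial>M)"
proof (rule integral_bind[OF assms(3,4) measurable_prob_algebraD[OF assms(2)]])
  show "finite_measure M" using assms(1) by (rule prob_space.finite_measure)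
  show "AE x in M. emeasure (g x) (space (g x)) \<le> ennreal 1"
    using measurable_space[OF assms(2)] by (intro AE_I2) (simp add: space_prob_algebra prob_space.emeasure_space_1)
qed

section \<open>Posterior means and garbling\<close>

definition residual_var :: "real measure \<Rightarrow> 's measure \<Rightarrow> (real \<Rightarrow> 's measure) \<Rightarrow> real" where
  "residual_var F \<Sigma> K = (\<integral>z. (fst z - post_mean F \<Sigma> K z)^2 \<partial>joint F \<Sigma> K)"

locale signal_model =
  fixes F :: "real measure" and \<Sigma> :: "'s measure" and K :: "real \<Rightarrow> 's measure" and \<alpha> \<beta> :: real
  assumes prob_space_F: "prob_space F" and sets_F [measurable_cong]: "sets F = sets borel"
    and kernel: "K \<in> borel \<rightarrow>\<^sub>M prob_algebra \<Sigma>"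
    and AE_F_in_interval: "AE \<theta> in F. \<theta> \<in> {\<alpha>..\<beta>}" and interval_nonempty: "\<alpha> \<le> \<beta>"
begin

abbreviation "J \<equiv> joint F \<Sigma> K"
abbreviation "post \<equiv> post_mean F \<Sigma> K"
abbreviation "signal_algebra \<equiv> vimage_algebra (space J) snd \<Sigma>"

lemma kernel_F: "K \<in> F \<rightarrow>\<^sub>M prob_algebra \<Sigma>"
  using kernel by simp

lemma prob_space_K: "prob_space (K \<theta>)" and sets_K: "sets (K \<theta>) = sets \<Sigma>"
  and space_K: "space (K \<theta>) = space \<Sigma>"
  using measurable_space[OF kernel, of \<theta>] sets_eq_imp_space_eq by (auto simp: space_prob_algebra)

lemma measurable_joint_kernel:
  "(\<lambda>\<theta>. distr (K \<theta>) (borel \<Otimes>\<^sub>M \<Sigma>) (Pair \<theta>)) \<in> F \<rightarrow>\<^sub>M prob_algebra (borel \<Otimes>\<^sub>M \<Sigma>)"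
  by (rule measurable_distr_prob_space2[OF kernel_F]) simp

lemma F_in_prob_algebra: "F \<in> space (prob_algebra F)"
  using prob_space_F by (simp add: space_prob_algebra)

lemma sets_joint [measurable_cong]: "sets J = sets (borel \<Otimes>\<^sub>M \<Sigma>)"
  unfolding joint_def by (rule sets_bind'[OF F_in_prob_algebra measurable_joint_kernel])

lemma space_joint: "space J = UNIV \<times> space \<Sigma>"
  using sets_eq_imp_space_eq[OF sets_joint] by (simp add: space_pair_measure)

lemma prob_space_joint: "prob_space J"
  unfolding joint_def by (rule prob_space_bind'[OF F_in_prob_algebra measurable_joint_kernel])

lemma finite_measure_joint: "finite_measure J"
  using prob_space_joint by (rule prob_space.finite_measure)

lemma measurable_Pair_K: "Pair \<theta> \<in> K \<theta> \<rightarrow>\<^sub>M borel \<Otimes>\<^sub>M \<Sigma>"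
  using sets_K by (simp cong: measurable_cong_sets)

lemma integral_joint:
  fixes \<phi> :: "real \<times> 's \<Rightarrow> real"
  assumes [measurable]: "\<phi> \<in> borel_measurable (borel \<Otimes>\<^sub>M \<Sigma>)"
    and bounded: "\<And>z. z \<in> space (borel \<Otimes>\<^sub>M \<Sigma>) \<Longrightarrow> \<bar>\<phi> z\<bar> \<le> B"
  shows "(\<integral>z. \<phi> z \<partial>J) = (\<integral>\<theta>. (\<integral>s. \<phi> (\<theta>, s) \<partial>K \<theta>) \<partial>F)"
  unfolding joint_def
  using integral_bind_prob_kernel[OF prob_space_F measurable_joint_kernel assms] measurable_Pair_K
  by (simp add: integral_distr)

lemma AE_joint_fst_in_interval: "AE z in J. fst z \<in> {\<alpha>..\<beta>}"
proof -
  have "AE \<theta> in F. AE z in distr (K \<theta>) (borel \<Otimes>\<^sub>M \<Sigma>) (Pair \<theta>). fst z \<in> {\<alpha>..\<beta>}"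
    using AE_F_in_interval by eventually_elim (simp add: AE_distr_iff measurable_Pair_K)
  then show ?thesis
    unfolding joint_def by (subst AE_bind[OF measurable_prob_algebraD[OF measurable_joint_kernel]]) simp_all
qed

lemma snd_in_space: "snd \<in> space J \<rightarrow> space \<Sigma>"
  unfolding space_joint by auto

lemma subalgebra_signal: "subalgebra J signal_algebra"
  unfolding subalgebra_def
  by (auto simp: sets_vimage_algebra2[OF snd_in_space] cong: measurable_cong_sets
           intro!: measurable_sets[of snd J \<Sigma>])

lemma sigma_finite_subalgebra_signal: "sigma_finite_subalgebra J signal_algebra"
  using finite_measure_joint subalgebra_signal
  by (intro finite_measure_subalgebra_is_sigma_finite)
     (simp add: finite_measure_subalgebra_def finite_measure_subalgebra_axioms_def)

lemma integrable_fst_joint: "integrable J fst"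
  by (rule finite_measure.integrable_interval_valued[OF finite_measure_joint _ AE_joint_fst_in_interval])
    measurable

lemma post_mean_measurable [measurable]:
  "post \<in> borel_measurable signal_algebra" "post \<in> borel_measurable J"
  unfolding post_mean_def
  using subalgebra_signal borel_measurable_subalgebra by (auto simp: subalgebra_def)

lemma AE_post_mean_in_interval: "AE z in J. post z \<in> {\<alpha>..\<beta>}"
  using AE_joint_fst_in_interval
    sigma_finite_subalgebra.real_cond_exp_ge_c[OF sigma_finite_subalgebra_signal integrable_fst_joint, of \<alpha>]
    sigma_finite_subalgebra.real_cond_exp_le_c[OF sigma_finite_subalgebra_signal integrable_fst_joint, of \<beta>]
  unfolding post_mean_def by (auto elim: eventually_mono)

lemma integral_post_mean: "(\<integral>z. post z \<partial>J) = (\<integral>z. fst z \<partial>J)"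
  unfolding post_mean_def
  by (rule sigma_finite_subalgebra.real_cond_exp_int(2)[OF sigma_finite_subalgebra_signal integrable_fst_joint])

(* Clamping the type changes nothing F-a.e. but makes integrands bounded everywhere, as integral_bind
   requires. *)
lemma integral_joint_fst:
  fixes q :: "real \<Rightarrow> real"
  assumes [measurable]: "q \<in> borel_measurable borel"
    and bounded: "\<And>t. t \<in> {\<alpha>..\<beta>} \<Longrightarrow> \<bar>q t\<bar> \<le> B"
  shows "(\<integral>z. q (fst z) \<partial>J) = (\<integral>\<theta>. q \<theta> \<partial>F)"
proof -
  have "(\<integral>z. q (fst z) \<partial>J) = (\<integral>z. q (clamp \<alpha> \<beta> (fst z)) \<partial>J)"
    using AE_joint_fst_in_interval by (intro integral_cong_AE) (auto elim: eventually_mono)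
  also have "\<dots> = (\<integral>\<theta>. q (clamp \<alpha> \<beta> \<theta>) \<partial>F)"
    using bounded[OF clamp_real_in[OF interval_nonempty]]
    by (subst integral_joint[where B = B]) (simp_all add: prob_space.prob_space[OF prob_space_K])
  also have "\<dots> = (\<integral>\<theta>. q \<theta> \<partial>F)"
    using AE_F_in_interval by (intro integral_cong_AE) (auto elim: eventually_mono)
  finally show ?thesis .
qed

lemma post_mean_factors_through_signal:
  obtains h where "h \<in> borel_measurable \<Sigma>" "\<forall>s\<in>space \<Sigma>. h s \<in> {\<alpha>..\<beta>}"
    "AE z in J. post z = h (snd z)"
proof -
  \<comment> \<open>Every level set of post is a preimage under snd, so post is constant on each fibre UNIV \<times> {s}.\<close>
  define h0 where "h0 s = post (0, s)" for s
  have "(\<lambda>s. (0, s)) \<in> \<Sigma> \<rightarrow>\<^sub>M signal_algebra"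
    by (rule measurable_vimage_algebra2) (auto simp: space_joint)
  then have h0_measurable [measurable]: "h0 \<in> borel_measurable \<Sigma>"
    unfolding h0_def by measurable
  have post_eq: "post z = h0 (snd z)" if z: "z \<in> space J" for z
  proof -
    obtain \<theta> s where z_eq: "z = (\<theta>, s)" by (cases z)
    have "post -` {post z} \<inter> space signal_algebra \<in> sets signal_algebra"
      by (rule measurable_sets[OF post_mean_measurable(1)]) simp
    then obtain A where "A \<in> sets \<Sigma>" and A: "post -` {post z} \<inter> space J = snd -` A \<inter> space J"
      unfolding sets_vimage_algebra2[OF snd_in_space] by auto
    have "z \<in> snd -` A \<inter> space J" using A z by blast
    then have "(0, s) \<in> snd -` A \<inter> space J" using z_eq by (simp add: space_joint)
    then have "(0, s) \<in> post -` {post z} \<inter> space J" using A by simp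
    then show ?thesis unfolding h0_def z_eq by simp
  qed
  show ?thesis
  proof
    show "(\<lambda>s. clamp \<alpha> \<beta> (h0 s)) \<in> borel_measurable \<Sigma>" by measurable
    show "\<forall>s\<in>space \<Sigma>. clamp \<alpha> \<beta> (h0 s) \<in> {\<alpha>..\<beta>}"
      using clamp_real_in[OF interval_nonempty] by blast
    show "AE z in J. post z = clamp \<alpha> \<beta> (h0 (snd z))"
      using AE_post_mean_in_interval AE_space
      by eventually_elim (metis post_eq clamp_cancel_cbox cbox_interval)
  qed
qed

lemma integral_times_post_mean:
  assumes "D \<in> borel_measurable signal_algebra" "integrable J (\<lambda>z. D z * fst z)"
  shows "(\<integral>z. D z * post z \<partial>J) = (\<integral>z. D z * fst z \<partial>J)"
  unfolding post_mean_def
  using sigma_finite_subalgebra.real_cond_exp_intg(2)[OF sigma_finite_subalgebra_signal assms(2,1)]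
  by simp

lemma post_mean_least_squares:
  assumes [measurable]: "f \<in> borel_measurable \<Sigma>" and f_in: "\<forall>s\<in>space \<Sigma>. f s \<in> {\<alpha>..\<beta>}"
  shows "residual_var F \<Sigma> K \<le> (\<integral>z. (fst z - f (snd z))^2 \<partial>J)"
proof -
  define \<phi> :: "real \<times> 's \<Rightarrow> real" where "\<phi> z = f (snd z)" for z
  have [measurable]: "snd \<in> signal_algebra \<rightarrow>\<^sub>M \<Sigma>"
    by (rule measurable_vimage_algebra1[OF snd_in_space])
  have \<phi>_signal: "\<phi> \<in> borel_measurable signal_algebra" and [measurable]: "\<phi> \<in> borel_measurable J"
    unfolding \<phi>_def by measurable
  have \<phi>_in: "AE z in J. \<phi> z \<in> {\<alpha>..\<beta>}"
    using f_in by (intro AE_I2) (auto simp: \<phi>_def space_joint)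
  note integrable = finite_measure.integrable_interval_valued_products[OF finite_measure_joint]
  note fst_in = AE_joint_fst_in_interval and post_in = AE_post_mean_in_interval
  have orthogonal: "(\<integral>z. (post z - \<phi> z) * post z \<partial>J) = (\<integral>z. (post z - \<phi> z) * fst z \<partial>J)"
    using \<phi>_signal integrable(2)[of post \<phi> fst, OF _ _ _ post_in \<phi>_in fst_in]
    by (intro integral_times_post_mean) simp_all
  have "(\<lambda>z. (fst z - \<phi> z)^2) = (\<lambda>z. (fst z - post z)^2 + (post z - \<phi> z)^2
      + 2 * ((post z - \<phi> z) * fst z) - 2 * ((post z - \<phi> z) * post z))"
    by (simp add: fun_eq_iff power2_eq_square algebra_simps)
  then have "(\<integral>z. (fst z - \<phi> z)^2 \<partial>J) = residual_var F \<Sigma> K + (\<integral>z. (post z - \<phi> z)^2 \<partial>J)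
      + 2 * (\<integral>z. (post z - \<phi> z) * fst z \<partial>J) - 2 * (\<integral>z. (post z - \<phi> z) * post z \<partial>J)"
    using integrable(3)[of fst post fst, OF _ _ _ fst_in post_in fst_in]
      integrable(3)[of post \<phi> post, OF _ _ _ post_in \<phi>_in post_in]
      integrable(2)[of post \<phi> fst, OF _ _ _ post_in \<phi>_in fst_in]
      integrable(2)[of post \<phi> post, OF _ _ _ post_in \<phi>_in post_in]
    by (simp add: residual_var_def)
  then show ?thesis using orthogonal by (simp add: \<phi>_def)
qed

lemma type_distribution_post_dist: "type_distribution (post_dist F \<Sigma> K)"
proof -
  have "integrable J (\<lambda>z. post z * post z)"
    using finite_measure.integrable_interval_valued_products(1)[OF finite_measure_joint _ _ _
      AE_post_mean_in_interval AE_post_mean_in_interval AE_post_mean_in_interval] by simp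
  then show ?thesis
    unfolding type_distribution_def type_distribution_axioms_def post_dist_def
    by (simp add: prob_space.prob_space_distr[OF prob_space_joint] integrable_distr_eq power2_eq_square)
qed

lemma dist_mean_post_dist: "dist_mean (post_dist F \<Sigma> K) = (\<integral>\<theta>. \<theta> \<partial>F)"
proof -
  have "(\<integral>z. fst z \<partial>J) = (\<integral>\<theta>. \<theta> \<partial>F)"
    by (rule integral_joint_fst[where B = "\<bar>\<alpha>\<bar> + \<bar>\<beta>\<bar>"]) auto
  then show ?thesis
    by (simp add: dist_mean_def post_dist_def integral_distr integral_post_mean)
qed

lemma residual_var_eq_moments:
  "residual_var F \<Sigma> K = (\<integral>\<theta>. \<theta>^2 \<partial>F) - (\<integral>z. (post z)^2 \<partial>J)"
proof -
  note integrable = finite_measure.integrable_interval_valued_products(1)[OF finite_measure_joint]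
  note fst_in = AE_joint_fst_in_interval and post_in = AE_post_mean_in_interval
  have "(\<integral>z. post z * post z \<partial>J) = (\<integral>z. post z * fst z \<partial>J)"
    using integrable[of post post fst, OF _ _ _ post_in post_in fst_in]
    by (intro integral_times_post_mean) simp_all
  moreover have "(\<integral>z. (fst z)^2 \<partial>J) = (\<integral>\<theta>. \<theta>^2 \<partial>F)"
  proof (rule integral_joint_fst[where B = "(\<bar>\<alpha>\<bar> + \<bar>\<beta>\<bar>)^2"])
    show "\<bar>t^2\<bar> \<le> (\<bar>\<alpha>\<bar> + \<bar>\<beta>\<bar>)^2" if "t \<in> {\<alpha>..\<beta>}" for t
      unfolding power_abs using that by (intro power_mono) auto
  qed simp
  moreover have "(\<lambda>z. (fst z - post z)^2) = (\<lambda>z. fst z * fst z + post z * post z - 2 * (post z * fst z))"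
    by (simp add: fun_eq_iff power2_eq_square algebra_simps)
  ultimately show ?thesis
    using integrable[of fst fst fst, OF _ _ _ fst_in fst_in fst_in]
      integrable[of post post post, OF _ _ _ post_in post_in post_in]
      integrable[of post post fst, OF _ _ _ post_in post_in fst_in]
    by (simp add: residual_var_def power2_eq_square)
qed

lemma post_var_eq:
  "post_var F \<Sigma> K = (\<integral>\<theta>. \<theta>^2 \<partial>F) - (\<integral>\<theta>. \<theta> \<partial>F)^2 - residual_var F \<Sigma> K"
proof -
  interpret J: prob_space J by (rule prob_space_joint)
  define M where "M = (\<integral>\<theta>. \<theta> \<partial>F)"
  note moments = J.interval_valued_moments[OF post_mean_measurable(2) AE_post_mean_in_interval]
  have "J.expectation post = M"
    using dist_mean_post_dist by (simp add: M_def dist_mean_def post_dist_def integral_distr)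
  moreover have "post_var F \<Sigma> K = (\<integral>z. (M - post z)^2 \<partial>J)"
    unfolding post_var_def dist_var_def dist_mean_post_dist M_def[symmetric]
    by (simp add: post_dist_def integral_distr power2_commute)
  ultimately show ?thesis
    using moments(2,4) by (simp add: residual_var_eq_moments M_def)
qed

lemma integral_joint_square_error:
  assumes [measurable]: "h \<in> borel_measurable \<Sigma>" and h_in: "\<forall>s\<in>space \<Sigma>. h s \<in> {\<alpha>..\<beta>}"
  shows "(\<integral>z. (fst z - h (snd z))^2 \<partial>J) = (\<integral>\<theta>. (\<integral>s. (clamp \<alpha> \<beta> \<theta> - h s)^2 \<partial>K \<theta>) \<partial>F)"
proof -
  have "(\<integral>z. (fst z - h (snd z))^2 \<partial>J) = (\<integral>z. (clamp \<alpha> \<beta> (fst z) - h (snd z))^2 \<partial>J)"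
    using AE_joint_fst_in_interval by (intro integral_cong_AE) (auto elim: eventually_mono)
  also have "\<dots> = (\<integral>\<theta>. (\<integral>s. (clamp \<alpha> \<beta> \<theta> - h s)^2 \<partial>K \<theta>) \<partial>F)"
  proof -
    have "\<bar>(clamp \<alpha> \<beta> (fst z) - h (snd z))^2\<bar> \<le> (\<beta> - \<alpha>)^2" if "z \<in> space (borel \<Otimes>\<^sub>M \<Sigma>)" for z
      using that h_in square_diff_le_interval[OF clamp_real_in[OF interval_nonempty]]
      by (auto simp: space_pair_measure)
    then show ?thesis
      using integral_joint[of "\<lambda>z. (clamp \<alpha> \<beta> (fst z) - h (snd z))^2" "(\<beta> - \<alpha>)^2"] by simp
  qed
  finally show ?thesis .
qed

lemma residual_var_eq_square_error:
  obtains h where "h \<in> borel_measurable \<Sigma>" "\<forall>s\<in>space \<Sigma>. h s \<in> {\<alpha>..\<beta>}"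
    "residual_var F \<Sigma> K = (\<integral>\<theta>. (\<integral>s. (clamp \<alpha> \<beta> \<theta> - h s)^2 \<partial>K \<theta>) \<partial>F)"
proof -
  obtain h where h [measurable]: "h \<in> borel_measurable \<Sigma>" and h_in: "\<forall>s\<in>space \<Sigma>. h s \<in> {\<alpha>..\<beta>}"
    and post_eq: "AE z in J. post z = h (snd z)"
    by (rule post_mean_factors_through_signal)
  have "residual_var F \<Sigma> K = (\<integral>z. (fst z - h (snd z))^2 \<partial>J)"
    unfolding residual_var_def using post_eq by (intro integral_cong_AE) (auto elim: eventually_mono)
  then show ?thesis using h h_in by (intro that) (simp_all add: integral_joint_square_error)
qed

lemma integral_bind_K:
  fixes \<phi> :: "'t \<Rightarrow> real"
  assumes "g \<in> \<Sigma> \<rightarrow>\<^sub>M prob_algebra T" "\<phi> \<in> borel_measurable T" "\<And>y. y \<in> space T \<Longrightarrow> \<bar>\<phi> y\<bar> \<le> B"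
  shows "(\<integral>y. \<phi> y \<partial>(K \<theta> \<bind> g)) = (\<integral>x. (\<integral>y. \<phi> y \<partial>g x) \<partial>K \<theta>)"
  using assms(1) sets_K
  by (intro integral_bind_prob_kernel[OF prob_space_K _ assms(2,3)]) (simp cong: measurable_cong_sets)

lemma square_error_garbling:
  fixes h :: "'t \<Rightarrow> real"
  assumes g: "g \<in> \<Sigma> \<rightarrow>\<^sub>M prob_algebra T"
    and h [measurable]: "h \<in> borel_measurable T" and h_in: "\<forall>s\<in>space T. h s \<in> {\<alpha>..\<beta>}"
  shows "(\<integral>z. (fst z - (\<integral>s. h s \<partial>g (snd z)))^2 \<partial>J)
    \<le> (\<integral>\<theta>. (\<integral>s. (clamp \<alpha> \<beta> \<theta> - h s)^2 \<partial>(K \<theta> \<bind> g)) \<partial>F)"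
proof -
  have [measurable]: "g \<in> \<Sigma> \<rightarrow>\<^sub>M subprob_algebra T" by (rule measurable_prob_algebraD[OF g])
  define f where "f x = (\<integral>s. h s \<partial>g x)" for x
  \<comment> \<open>Expanded form of \<open>\<integral>s. (clamp \<alpha> \<beta> \<theta> - h s)^2 \<partial>g x\<close>, measurable in \<open>(\<theta>, x)\<close> by construction.\<close>
  define \<psi> where "\<psi> z = (clamp \<alpha> \<beta> (fst z) - f (snd z))^2
    + ((\<integral>s. (h s)^2 \<partial>g (snd z)) - (f (snd z))^2)" for z
  have [measurable]: "f \<in> borel_measurable \<Sigma>" "\<psi> \<in> borel_measurable (borel \<Otimes>\<^sub>M \<Sigma>)"
    unfolding f_def \<psi>_def by measurable
  note moments = kernel_interval_valued_moments[OF g h h_in, folded f_def]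
  have \<psi>_eq: "\<psi> (\<theta>, x) = (\<integral>s. (clamp \<alpha> \<beta> \<theta> - h s)^2 \<partial>g x)" if "x \<in> space \<Sigma>" for \<theta> x
    using moments(3)[OF that] by (simp add: \<psi>_def)
  have \<psi>_bounds: "(clamp \<alpha> \<beta> (fst z) - f (snd z))^2 \<le> \<psi> z"
    "(clamp \<alpha> \<beta> (fst z) - f (snd z))^2 \<in> {0..(\<beta> - \<alpha>)^2}" "\<psi> z \<in> {0..(\<beta> - \<alpha>)^2}"
    if "snd z \<in> space \<Sigma>" for z
  proof -
    show lower: "(clamp \<alpha> \<beta> (fst z) - f (snd z))^2 \<le> \<psi> z"
      using moments(4)[OF that] by (simp add: \<psi>_def)
    moreover have "\<psi> z \<le> (\<beta> - \<alpha>)^2"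
      using \<psi>_eq[OF that, of "fst z"] moments(5)[OF that clamp_real_in[OF interval_nonempty]] by simp
    ultimately show "(clamp \<alpha> \<beta> (fst z) - f (snd z))^2 \<in> {0..(\<beta> - \<alpha>)^2}" "\<psi> z \<in> {0..(\<beta> - \<alpha>)^2}"
      using order_trans[OF zero_le_power2 lower] by auto
  qed
  then have in_range: "AE z in J. (clamp \<alpha> \<beta> (fst z) - f (snd z))^2 \<in> {0..(\<beta> - \<alpha>)^2}"
    "AE z in J. \<psi> z \<in> {0..(\<beta> - \<alpha>)^2}"
    by (auto intro!: AE_I2 simp: space_joint simp del: atLeastAtMost_iff)
  have "(\<integral>z. (fst z - f (snd z))^2 \<partial>J) = (\<integral>z. (clamp \<alpha> \<beta> (fst z) - f (snd z))^2 \<partial>J)"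
    using AE_joint_fst_in_interval by (intro integral_cong_AE) (auto elim: eventually_mono)
  also have "\<dots> \<le> (\<integral>z. \<psi> z \<partial>J)"
  proof (rule integral_mono)
    show "integrable J (\<lambda>z. (clamp \<alpha> \<beta> (fst z) - f (snd z))^2)" "integrable J \<psi>"
      by (rule finite_measure.integrable_interval_valued[OF finite_measure_joint _ in_range(1)]
        finite_measure.integrable_interval_valued[OF finite_measure_joint _ in_range(2)]; measurable)+
  qed (use \<psi>_bounds(1) in \<open>auto simp: space_joint\<close>)
  also have "\<dots> = (\<integral>\<theta>. (\<integral>x. \<psi> (\<theta>, x) \<partial>K \<theta>) \<partial>F)"
    using \<psi>_bounds(3) by (intro integral_joint[where B = "(\<beta> - \<alpha>)^2"]) (auto simp: space_pair_measure)
  also have "\<dots> = (\<integral>\<theta>. (\<integral>s. (clamp \<alpha> \<beta> \<theta> - h s)^2 \<partial>(K \<theta> \<bind> g)) \<partial>F)"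
  proof (intro Bochner_Integration.integral_cong refl)
    fix \<theta>
    have "\<bar>(clamp \<alpha> \<beta> \<theta> - h s)^2\<bar> \<le> (\<beta> - \<alpha>)^2" if "s \<in> space T" for s
      using that h_in square_diff_le_interval[OF clamp_real_in[OF interval_nonempty]] by simp
    then show "(\<integral>x. \<psi> (\<theta>, x) \<partial>K \<theta>) = (\<integral>s. (clamp \<alpha> \<beta> \<theta> - h s)^2 \<partial>(K \<theta> \<bind> g))"
      using \<psi>_eq by (subst integral_bind_K[OF g]) (auto simp: space_K intro!: Bochner_Integration.integral_cong)
  qed
  finally show ?thesis unfolding f_def .
qed

end

lemma residual_var_garbling:
  fixes \<Sigma>1 :: "'s measure" and \<Sigma>2 :: "'t measure"
  assumes M1: "signal_model F \<Sigma>1 K1 \<alpha> \<beta>" and M2: "signal_model F \<Sigma>2 K2 \<alpha> \<beta>"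
    and g: "g \<in> \<Sigma>1 \<rightarrow>\<^sub>M prob_algebra \<Sigma>2" and K2_eq: "\<And>\<theta>. K2 \<theta> = K1 \<theta> \<bind> g"
  shows "residual_var F \<Sigma>1 K1 \<le> residual_var F \<Sigma>2 K2"
proof -
  interpret M1: signal_model F \<Sigma>1 K1 \<alpha> \<beta> by (rule M1)
  interpret M2: signal_model F \<Sigma>2 K2 \<alpha> \<beta> by (rule M2)
  obtain h where h: "h \<in> borel_measurable \<Sigma>2" "\<forall>s\<in>space \<Sigma>2. h s \<in> {\<alpha>..\<beta>}"
    and residual2: "residual_var F \<Sigma>2 K2 = (\<integral>\<theta>. (\<integral>s. (clamp \<alpha> \<beta> \<theta> - h s)^2 \<partial>K2 \<theta>) \<partial>F)"
    by (rule M2.residual_var_eq_square_error)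
  note moments = kernel_interval_valued_moments[OF g h]
  have "residual_var F \<Sigma>1 K1 \<le> (\<integral>z. (fst z - (\<integral>s. h s \<partial>g (snd z)))^2 \<partial>M1.J)"
    using moments(1,2) by (intro M1.post_mean_least_squares) auto
  also have "\<dots> \<le> residual_var F \<Sigma>2 K2"
    unfolding residual2 K2_eq by (rule M1.square_error_garbling[OF g h])
  finally show ?thesis .
qed

section \<open>Information structures\<close>

lemma signal_model_info_struct:
  assumes "prob_space F" "sets F = sets borel" "prior_support F \<alpha> \<beta>" "K \<in> info_structs \<Sigma>"
  shows "signal_model F \<Sigma> K \<alpha> \<beta>"
proof -
  interpret prob_space F by fact
  have "AE \<theta> in F. \<theta> \<in> {\<alpha>..\<beta>}"
    using assms(3) by (intro AE_prob_1) (simp add: prior_support_def measure_def)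
  then show ?thesis
    using assms by unfold_locales (auto simp: info_structs_def prior_support_def)
qed

lemma exp_effort_eq_affine_effort:
  assumes "b > 0" "prob_space F" "sets F = sets borel" "prior_support F \<alpha> \<beta>" "K \<in> info_structs \<Sigma>"
  shows "exp_effort a b c F \<Sigma> K = affine_effort a b c (\<integral>\<theta>. \<theta> \<partial>F) (post_var F \<Sigma> K)"
proof -
  interpret signal_model F \<Sigma> K \<alpha> \<beta> by (rule signal_model_info_struct[OF assms(2-5)])
  show ?thesis
    unfolding exp_effort_def post_var_def
    by (simp add: type_distribution.benchmark_effort_eq[OF type_distribution_post_dist assms(1)]
      dist_mean_post_dist)
qed

lemma post_var_le_of_more_informative:
  assumes "prob_space F" "sets F = sets borel" "prior_support F \<alpha> \<beta>"
    and "K1 \<in> info_structs \<Sigma>1" "K2 \<in> info_structs \<Sigma>2" "more_informative \<Sigma>1 K1 \<Sigma>2 K2"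
  shows "post_var F \<Sigma>2 K2 \<le> post_var F \<Sigma>1 K1"
proof -
  note models = signal_model_info_struct[OF assms(1-3) assms(4)] signal_model_info_struct[OF assms(1-3) assms(5)]
  show ?thesis
    using assms(6) residual_var_garbling[OF models]
      signal_model.post_var_eq[OF models(1)] signal_model.post_var_eq[OF models(2)]
    unfolding more_informative_def by fastforce
qed

lemma no_disclosure_info_struct: "no_disclosure \<in> info_structs (count_space UNIV)"
  by (simp add: info_structs_def no_disclosure_def space_prob_algebra prob_space_return)

lemma full_disclosure_info_struct: "full_disclosure \<in> info_structs borel"
  by (simp add: info_structs_def full_disclosure_def)

lemma more_informative_no_disclosure:
  assumes "K \<in> info_structs \<Sigma>"
  shows "more_informative \<Sigma> K (count_space UNIV) no_disclosure"
  unfolding more_informative_def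
proof (intro bexI allI)
  fix \<theta>
  have "K \<theta> \<in> space (prob_algebra \<Sigma>)"
    using measurable_space[of K borel "prob_algebra \<Sigma>" \<theta>] assms by (simp add: info_structs_def)
  then show "no_disclosure \<theta> = K \<theta> \<bind> (\<lambda>_. return (count_space UNIV) ())"
    unfolding no_disclosure_def
    by (subst bind_const') (auto simp: space_prob_algebra subprob_space_return)
qed (simp add: space_prob_algebra prob_space_return)

lemma full_disclosure_more_informative:
  assumes "K \<in> info_structs \<Sigma>"
  shows "more_informative borel full_disclosure \<Sigma> K"
  unfolding more_informative_def
proof (intro bexI allI)
  show "K \<in> borel \<rightarrow>\<^sub>M prob_algebra \<Sigma>" using assms by (simp add: info_structs_def)
  then show "K \<theta> = full_disclosure \<theta> \<bind> K" for \<theta>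
    unfolding full_disclosure_def by (simp add: bind_return[OF measurable_prob_algebraD])
qed

theorem theorem5:
  fixes a b c \<alpha> \<beta> :: real and F :: "real measure"
    and \<Sigma>1 :: "'b measure" and \<Sigma>2 :: "'c measure"
  assumes "b > 0" and "c > 0"
    and "prob_space F" and "sets F = sets borel"
    and "prior_support F \<alpha> \<beta>" and "0 < \<alpha>" and "\<beta> < c"
  shows
    "(\<forall>K1 \<in> info_structs \<Sigma>1. \<forall>K2 \<in> info_structs \<Sigma>2.
        post_var F \<Sigma>1 K1 = post_var F \<Sigma>2 K2 \<longrightarrow>
        exp_effort a b c F \<Sigma>1 K1 = exp_effort a b c F \<Sigma>2 K2)
   \<and> no_disclosure \<in> info_structs (count_space UNIV)
   \<and> full_disclosure \<in> info_structs borel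
   \<and> (a > 0 \<longrightarrow> (\<forall>K \<in> info_structs \<Sigma>1.
        exp_effort a b c F \<Sigma>1 K \<le> exp_effort a b c F (count_space UNIV) no_disclosure))
   \<and> (a < 0 \<longrightarrow> (\<forall>K \<in> info_structs \<Sigma>1.
        exp_effort a b c F \<Sigma>1 K \<le> exp_effort a b c F borel full_disclosure))
   \<and> (a = 0 \<longrightarrow> (\<forall>K1 \<in> info_structs \<Sigma>1. \<forall>K2 \<in> info_structs \<Sigma>2.
        exp_effort a b c F \<Sigma>1 K1 = exp_effort a b c F \<Sigma>2 K2))
   \<and> (\<forall>K1 \<in> info_structs \<Sigma>1. \<forall>K2 \<in> info_structs \<Sigma>2.
        more_informative \<Sigma>1 K1 \<Sigma>2 K2 \<longrightarrow>
        (a > 0 \<longrightarrow> exp_effort a b c F \<Sigma>1 K1 \<le> exp_effort a b c F \<Sigma>2 K2) \<and>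
        (a < 0 \<longrightarrow> exp_effort a b c F \<Sigma>1 K1 \<ge> exp_effort a b c F \<Sigma>2 K2))"
proof -
  note effort = exp_effort_eq_affine_effort[OF assms(1,3-5)]
  note blackwell = post_var_le_of_more_informative[OF assms(3-5)]
  note nd = no_disclosure_info_struct and fd = full_disclosure_info_struct
  show ?thesis
  proof (intro conjI ballI impI nd fd)
    fix K assume "K \<in> info_structs \<Sigma>1"
    note K = this more_informative_no_disclosure[OF this] full_disclosure_more_informative[OF this]
    show "exp_effort a b c F \<Sigma>1 K \<le> exp_effort a b c F (count_space UNIV) no_disclosure" if "a > 0"
      using affine_effort_antimono[OF that blackwell[OF K(1) nd K(2)]] by (simp add: effort K(1) nd)
    show "exp_effort a b c F \<Sigma>1 K \<le> exp_effort a b c F borel full_disclosure" if "a < 0"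
      using affine_effort_mono[OF that blackwell[OF fd K(1) K(3)]] by (simp add: effort K(1) fd)
  next
    fix K1 K2 assume K: "K1 \<in> info_structs \<Sigma>1" "K2 \<in> info_structs \<Sigma>2"
    show "exp_effort a b c F \<Sigma>1 K1 = exp_effort a b c F \<Sigma>2 K2"
      if "post_var F \<Sigma>1 K1 = post_var F \<Sigma>2 K2" using that by (simp add: effort K)
    show "exp_effort a b c F \<Sigma>1 K1 = exp_effort a b c F \<Sigma>2 K2"
      if "a = 0" unfolding effort[OF K(1)] effort[OF K(2)] using that by (simp add: affine_effort_def)
    assume "more_informative \<Sigma>1 K1 \<Sigma>2 K2"
    note var_le = blackwell[OF K this]
    show "exp_effort a b c F \<Sigma>1 K1 \<le> exp_effort a b c F \<Sigma>2 K2" if "a > 0"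
      using affine_effort_antimono[OF that var_le] by (simp add: effort K)
    show "exp_effort a b c F \<Sigma>2 K2 \<le> exp_effort a b c F \<Sigma>1 K1" if "a < 0"
      using affine_effort_mono[OF that var_le] by (simp add: effort K)
  qed
qed

end
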